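(* Let $0<b<1$, $0<c<1$, and let $(\epsilon_n)_{n\geq1}$ satisfy $0<\epsilon_n<n$, $\epsilon_{n+1}\geq\epsilon_n+\frac{1}{2^{n/2}\ln 2}$ for all $n$, and $\epsilon_n/n\to0$. Put $t_n=2^{1-\epsilon_n/n}$, $a_n=c^{t_n^n}$ and $F_n(z,w)=(z^2+a_nw,\ a_nz)$. Let $\Omega=\{(z,w)\in\mathbb{C}^2:F_n\circ\cdots\circ F_1(z,w)\to0\}$, let $K\subseteq\Omega$ be compact, and set $\delta_n=\max\{|z_n|,|w_n|:(z,w)\in K\}$ where $(z_n,w_n)=F_n\circ\cdots\circ F_1(z,w)$. Suppose that for arbitrarily large $n$ there is an integer $k(n)\geq1$ with $t_{n+k(n)+1}\leq 2^{\frac{k(n)}{n+k(n)+1}}$. Then there exist arbitrarily large $n$ such that $\delta_{n+k}\leq a_{n+k+1}b^k$ for all $k\geq0$. *)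

theory Defs
  imports "HOL-Analysis.Analysis"
begin

definition tseq :: "(nat \<Rightarrow> real) \<Rightarrow> nat \<Rightarrow> real" where
  "tseq eps n = 2 powr (1 - eps n / real n)"

definition aseq :: "real \<Rightarrow> (nat \<Rightarrow> real) \<Rightarrow> nat \<Rightarrow> real" where
  "aseq c eps n = c powr (tseq eps n ^ n)"

definition Fmap :: "(nat \<Rightarrow> real) \<Rightarrow> nat \<Rightarrow> complex \<times> complex \<Rightarrow> complex \<times> complex" where
  "Fmap a n p = (fst p ^ 2 + complex_of_real (a n) * snd p, complex_of_real (a n) * fst p)"

fun orb :: "(nat \<Rightarrow> real) \<Rightarrow> nat \<Rightarrow> complex \<times> complex \<Rightarrow> complex \<times> complex" where
  "orb a 0 p = p"
| "orb a (Suc n) p = Fmap a (Suc n) (orb a n p)"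

definition basin :: "(nat \<Rightarrow> real) \<Rightarrow> (complex \<times> complex) set" where
  "basin a = {p. (\<lambda>n. orb a n p) \<longlonglongrightarrow> 0}"

definition delta :: "(nat \<Rightarrow> real) \<Rightarrow> (complex \<times> complex) set \<Rightarrow> nat \<Rightarrow> real" where
  "delta a K n = (SUP p\<in>K. max (cmod (fst (orb a n p))) (cmod (snd (orb a n p))))"

end

theory Submission
  imports Defs "HOL-Real_Asymp.Real_Asymp"
begin

text \<open>
  Let \<open>m j p\<close> be the sup norm of the \<open>j\<close>-th iterate of \<open>p\<close>, so that
  \<open>m (j+1) \<le> m j ^ 2 + a (j+1) * m j\<close>. Writing \<open>a j = c powr u j\<close> with
  \<open>u j = 2 powr (j - \<epsilon> j)\<close>, the growth condition on \<open>\<epsilon>\<close> gives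
  \<open>u (j+1) \<le> 2 u j - u j / 2 powr (j/2)\<close>, and the gap \<open>u j / 2 powr (j/2)\<close> tends to
  infinity because \<open>\<epsilon> j / j \<rightarrow> 0\<close>; hence eventually \<open>2 a j ^ 2 \<le> b a (j+1)\<close>.
  From then on, once \<open>m j \<le> a (j+1)\<close>, the bound \<open>m (j+i) \<le> a (j+i+1) b ^ i\<close>
  propagates. By compactness the orbits of all points of \<open>K\<close> are uniformly small at
  some late time \<open>N\<close>; as long as they stay above the coefficients they then decay
  doubly exponentially, \<open>2 m (N+i) \<le> (2 m N) ^ 2 ^ i\<close>. The hypothesis on
  \<open>t (n+k+1)\<close> says exactly \<open>a (n+k+1) \<ge> c ^ 2 ^ k\<close>, which this decay beats by
  time \<open>n + k\<close>.
\<close>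

definition orb_norm :: "(nat \<Rightarrow> real) \<Rightarrow> nat \<Rightarrow> complex \<times> complex \<Rightarrow> real" where
  "orb_norm a j p = max (cmod (fst (orb a j p))) (cmod (snd (orb a j p)))"

lemma orb_norm_nonneg: "0 \<le> orb_norm a j p"
  by (simp add: orb_norm_def le_max_iff_disj)

lemma orb_norm_Suc_le:
  assumes "a (Suc j) \<ge> 0"
  shows "orb_norm a (Suc j) p \<le> (orb_norm a j p)\<^sup>2 + a (Suc j) * orb_norm a j p"
proof -
  obtain z w where zw: "orb a j p = (z, w)" by (cases "orb a j p") auto
  define m where "m = orb_norm a j p"
  have z: "cmod z \<le> m" and w: "cmod w \<le> m"
    using zw by (auto simp: m_def orb_norm_def)
  have "0 \<le> m" by (simp add: m_def orb_norm_nonneg)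
  have "cmod (z\<^sup>2 + of_real (a (Suc j)) * w) \<le> cmod z ^ 2 + a (Suc j) * cmod w"
    using assms by (metis abs_of_nonneg norm_mult norm_of_real norm_power norm_triangle_ineq)
  also have "\<dots> \<le> m\<^sup>2 + a (Suc j) * m"
    using z w assms by (intro add_mono power_mono mult_left_mono) auto
  finally have "cmod (z\<^sup>2 + of_real (a (Suc j)) * w) \<le> m\<^sup>2 + a (Suc j) * m" .
  moreover have "cmod (of_real (a (Suc j)) * z) \<le> m\<^sup>2 + a (Suc j) * m"
    using z assms \<open>0 \<le> m\<close> mult_left_mono[OF z, of "a (Suc j)"]
    by (simp add: norm_mult) (smt (verit) zero_le_power2)
  ultimately show ?thesis
    using zw by (simp add: m_def orb_norm_def Fmap_def)
qed

lemma continuous_on_orb: "continuous_on UNIV (orb a n)"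
proof (induction n)
  case (Suc n)
  then have "continuous_on UNIV (\<lambda>p. Fmap a (Suc n) (orb a n p))"
    unfolding Fmap_def by (intro continuous_intros) auto
  then show ?case by simp
qed (simp add: continuous_on_id')

lemma continuous_on_orb_norm: "continuous_on UNIV (orb_norm a n)"
  unfolding orb_norm_def using continuous_on_orb[of a n] by (intro continuous_intros) auto

lemma tendsto_orb_norm_basin:
  assumes "p \<in> basin a"
  shows "(\<lambda>n. orb_norm a n p) \<longlonglongrightarrow> 0"
proof -
  have lim: "(\<lambda>n. orb a n p) \<longlonglongrightarrow> 0" using assms by (simp add: basin_def)
  show ?thesis
    unfolding orb_norm_def
    using tendsto_max[OF tendsto_norm[OF tendsto_fst[OF lim]] tendsto_norm[OF tendsto_snd[OF lim]]]
    by simp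
qed

lemma delta_le:
  assumes "K \<noteq> {}" "\<And>p. p \<in> K \<Longrightarrow> orb_norm a n p \<le> B"
  shows "delta a K n \<le> B"
  unfolding delta_def orb_norm_def[symmetric] using assms by (intro cSUP_least) auto

lemma orb_norm_decreasing:
  assumes "\<And>n. a n \<ge> 0" "\<And>n. a (Suc n) \<le> c" "\<rho> + c \<le> 1"
    and small: "orb_norm a j p \<le> \<rho>"
  shows "orb_norm a (j + i) p \<le> orb_norm a j p"
proof (induction i)
  case (Suc i)
  define m where "m = orb_norm a (j + i) p"
  have "0 \<le> m" by (simp add: m_def orb_norm_nonneg)
  have "m + a (Suc (j + i)) \<le> 1"
    using Suc small assms(2)[of "j + i"] assms(3) by (simp add: m_def)
  have "orb_norm a (Suc (j + i)) p \<le> m\<^sup>2 + a (Suc (j + i)) * m"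
    using orb_norm_Suc_le[of a "j + i", OF assms(1)] by (simp add: m_def)
  also have "\<dots> = m * (m + a (Suc (j + i)))" by (simp add: power2_eq_square algebra_simps)
  also have "\<dots> \<le> m" using \<open>m + a (Suc (j + i)) \<le> 1\<close> \<open>0 \<le> m\<close> by (simp add: mult_left_le)
  finally show ?case using Suc by (simp add: m_def)
qed simp

lemma uniformly_small_on_compact:
  assumes "compact K" "K \<subseteq> basin a" "\<rho> > 0"
    and "\<And>n. a n \<ge> 0" "\<And>n. a (Suc n) \<le> c" "\<rho> + c \<le> 1"
  shows "\<exists>N\<ge>L. \<forall>p\<in>K. orb_norm a N p \<le> \<rho>"
proof -
  define U where "U j = {p. orb_norm a j p < \<rho>}" for j
  have "open (U j)" for j
    unfolding U_def by (rule open_Collect_less) (auto intro: continuous_on_orb_norm continuous_intros)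
  moreover have "K \<subseteq> \<Union> (U ` {L..})"
  proof
    fix p assume "p \<in> K"
    then have "eventually (\<lambda>n. orb_norm a n p < \<rho>) sequentially"
      using assms(2,3) tendsto_orb_norm_basin order_tendstoD(2) by blast
    then obtain N where "\<forall>n\<ge>N. orb_norm a n p < \<rho>" by (auto simp: eventually_sequentially)
    then have "p \<in> U (max N L)" by (simp add: U_def)
    then show "p \<in> \<Union> (U ` {L..})" by auto
  qed
  ultimately obtain C where C: "C \<subseteq> {L..}" "finite C" "K \<subseteq> \<Union> (U ` C)"
    using compactE_image[OF assms(1)] by metis
  define N where "N = Max (insert L C)"
  have "orb_norm a N p \<le> \<rho>" if "p \<in> K" for p
  proof -
    obtain j where "j \<in> C" and small: "orb_norm a j p \<le> \<rho>"
      using C(3) \<open>p \<in> K\<close> by (force simp: U_def)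
    then have "j \<le> N" using C(2) by (simp add: N_def)
    have "orb_norm a (j + (N - j)) p \<le> orb_norm a j p"
      using orb_norm_decreasing[OF assms(4,5,6) small] .
    then show ?thesis using \<open>j \<le> N\<close> small by simp
  qed
  moreover have "N \<ge> L" using C(2) by (simp add: N_def)
  ultimately show ?thesis by blast
qed

lemma orb_norm_Suc_le_geometric:
  assumes "0 < b" "b \<le> 1" "a (Suc j) \<ge> 0"
    and ratio: "2 * (a (Suc j))\<^sup>2 \<le> b * a (Suc (Suc j))"
    and le: "orb_norm a j p \<le> a (Suc j) * b ^ i"
  shows "orb_norm a (Suc j) p \<le> a (Suc (Suc j)) * b ^ Suc i"
proof -
  define m where "m = orb_norm a j p"
  define \<alpha> where "\<alpha> = a (Suc j)"
  have "0 \<le> m" by (simp add: m_def orb_norm_nonneg)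
  have le: "m \<le> \<alpha> * b ^ i" using le by (simp add: m_def \<alpha>_def)
  have bi: "0 \<le> b ^ i" "b ^ i \<le> 1" using assms(1,2) by (auto simp: power_le_one)
  have "m\<^sup>2 \<le> (\<alpha> * b ^ i)\<^sup>2" using \<open>0 \<le> m\<close> le by (intro power_mono) auto
  also have "\<dots> = \<alpha>\<^sup>2 * (b ^ i * b ^ i)" by (simp add: power2_eq_square)
  also have "\<dots> \<le> \<alpha>\<^sup>2 * b ^ i" using bi by (intro mult_left_mono) (auto simp: mult_left_le)
  finally have "m\<^sup>2 \<le> \<alpha>\<^sup>2 * b ^ i" .
  moreover have "\<alpha> * m \<le> \<alpha>\<^sup>2 * b ^ i"
    using mult_left_mono[OF le, of \<alpha>] assms(3) by (simp add: \<alpha>_def power2_eq_square algebra_simps)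
  ultimately have "orb_norm a (Suc j) p \<le> 2 * \<alpha>\<^sup>2 * b ^ i"
    using orb_norm_Suc_le[of a j p, OF assms(3)] by (simp add: m_def \<alpha>_def)
  also have "\<dots> \<le> b * a (Suc (Suc j)) * b ^ i"
    using ratio bi by (intro mult_right_mono) (auto simp: \<alpha>_def)
  finally show ?thesis by (simp add: algebra_simps)
qed

lemma orb_norm_le_geometric:
  assumes "0 < b" "b \<le> 1" "\<And>n. a n \<ge> 0"
    and ratio: "\<And>j. j \<ge> N \<Longrightarrow> 2 * (a j)\<^sup>2 \<le> b * a (Suc j)" and "j \<ge> N"
    and le: "orb_norm a j p \<le> a (Suc j)"
  shows "orb_norm a (j + i) p \<le> a (Suc (j + i)) * b ^ i"
proof (induction i)
  case (Suc i)
  have "orb_norm a (Suc (j + i)) p \<le> a (Suc (Suc (j + i))) * b ^ Suc i"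
    using \<open>j \<ge> N\<close> by (intro orb_norm_Suc_le_geometric[OF assms(1-3) ratio Suc]) simp
  then show ?case by simp
qed (use le in simp)

lemma orb_norm_dichotomy:
  assumes "0 < b" "b \<le> 1" "\<And>n. a n \<ge> 0"
    and ratio: "\<And>j. j \<ge> N \<Longrightarrow> 2 * (a j)\<^sup>2 \<le> b * a (Suc j)"
  shows "orb_norm a (N + i) p \<le> a (Suc (N + i))
    \<or> 2 * orb_norm a (N + i) p \<le> (2 * orb_norm a N p) ^ 2 ^ i"
proof (induction i)
  case (Suc i)
  define m where "m = orb_norm a (N + i) p"
  show ?case
  proof (cases "m \<le> a (Suc (N + i))")
    case True
    then have "orb_norm a (N + Suc i) p \<le> a (Suc (N + Suc i)) * b"
      using orb_norm_le_geometric[where a=a and N=N and j="N + i" and i=1, OF assms] by (simp add: m_def)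
    also have "\<dots> \<le> a (Suc (N + Suc i))" using assms(2,3) by (simp add: mult_left_le)
    finally show ?thesis by simp
  next
    case False
    have "0 \<le> m" by (simp add: m_def orb_norm_nonneg)
    have "orb_norm a (Suc (N + i)) p \<le> m\<^sup>2 + a (Suc (N + i)) * m"
      using orb_norm_Suc_le[of a "N + i", OF assms(3)] by (simp add: m_def)
    also have "\<dots> \<le> m\<^sup>2 + m * m" using False \<open>0 \<le> m\<close> by (simp add: mult_right_mono)
    finally have "2 * orb_norm a (N + Suc i) p \<le> (2 * m)\<^sup>2" by (simp add: power2_eq_square)
    also have "\<dots> \<le> ((2 * orb_norm a N p) ^ 2 ^ i)\<^sup>2"
      using Suc False \<open>0 \<le> m\<close> by (intro power_mono) (auto simp: m_def)
    also have "\<dots> = (2 * orb_norm a N p) ^ 2 ^ Suc i" by (simp only: power_mult[symmetric] power_Suc2)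
    finally show ?thesis by simp
  qed
qed simp

lemma orb_norm_captured:
  assumes "0 < b" "b \<le> 1" "\<And>n. a n \<ge> 0"
    and ratio: "\<And>j. j \<ge> N \<Longrightarrow> 2 * (a j)\<^sup>2 \<le> b * a (Suc j)"
    and "0 < c" "c \<le> 1" "2 * orb_norm a N p \<le> c" "N + k \<le> j"
    and lower: "c ^ 2 ^ k \<le> a (Suc j)"
  shows "orb_norm a j p \<le> a (Suc j)"
proof -
  define i where "i = j - N"
  have j: "j = N + i" and "k \<le> i" using \<open>N + k \<le> j\<close> by (auto simp: i_def)
  from orb_norm_dichotomy[where a=a and N=N and i=i and p=p, OF assms(1-4)]
  show ?thesis unfolding j
  proof
    assume doubly_exp: "2 * orb_norm a (N + i) p \<le> (2 * orb_norm a N p) ^ 2 ^ i"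
    have "(2 * orb_norm a N p) ^ 2 ^ i \<le> c ^ 2 ^ i"
      using assms(7) by (intro power_mono) (auto simp: orb_norm_nonneg)
    also have "\<dots> \<le> c ^ 2 ^ k"
      using assms(5,6) power_increasing[OF \<open>k \<le> i\<close>, of "2::nat"] by (simp add: power_decreasing)
    finally show "orb_norm a (N + i) p \<le> a (Suc (N + i))"
      using doubly_exp lower[unfolded j] orb_norm_nonneg[of a "N + i" p] by linarith
  qed
qed

lemma aseq_eq_powr:
  assumes "j \<ge> 1"
  shows "aseq c eps j = c powr (2 powr (real j - eps j))"
proof -
  have "(2 powr (1 - eps j / real j)) ^ j = 2 powr (real j * (1 - eps j / real j))"
    by (simp add: powr_power)
  also have "real j * (1 - eps j / real j) = real j - eps j"
    using assms by (simp add: field_simps)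
  finally show ?thesis by (simp add: aseq_def tseq_def)
qed

lemma aseq_nonneg: "0 \<le> aseq c eps n"
  by (simp add: aseq_def)

lemma aseq_le:
  assumes "0 < c" "c < 1" "n \<ge> 1" "eps n < real n"
  shows "aseq c eps n \<le> c"
proof -
  have "1 \<le> 2 powr (real n - eps n)"
    using assms(4) by (intro ge_one_powr_ge_zero) auto
  then have "c powr (2 powr (real n - eps n)) \<le> c powr 1"
    using assms(1,2) by (intro powr_mono') auto
  then show ?thesis using assms by (simp add: aseq_eq_powr)
qed

lemma aseq_ge_of_tseq_le:
  assumes "0 < c" "c < 1" "m \<ge> 1" "tseq eps m \<le> 2 powr (real k / real m)"
  shows "c ^ 2 ^ k \<le> aseq c eps m"
proof -
  have "real m * (1 - eps m / real m) \<le> real m * (real k / real m)"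
    using assms(4) by (intro mult_left_mono) (auto simp: tseq_def)
  moreover have "real m * (1 - eps m / real m) = real m - eps m"
    "real m * (real k / real m) = real k" using assms(3) by (simp_all add: field_simps)
  ultimately have "real m - eps m \<le> real k" by simp
  then have "2 powr (real m - eps m) \<le> 2 ^ k"
    using powr_mono[of "real m - eps m" "real k" 2] by (simp add: powr_realpow)
  then have "c powr (2 ^ k) \<le> c powr (2 powr (real m - eps m))"
    using assms(1,2) by (intro powr_mono') auto
  moreover have "c powr (2 ^ k) = c ^ 2 ^ k" using assms(1) powr_realpow[of c "2 ^ k"] by simp
  ultimately show ?thesis using assms by (simp add: aseq_eq_powr)
qed

lemma exp_minus_le_one_minus_half:
  fixes x :: real
  assumes "0 \<le> x" "x \<le> 1"
  shows "exp (- x) \<le> 1 - x / 2"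
proof -
  have "exp (- x) \<le> 1 / (1 + x)"
    using exp_ge_add_one_self[of x] assms by (simp add: exp_minus field_simps)
  also have "\<dots> \<le> 1 - x / 2" using assms mult_left_le[of x x] by (simp add: field_simps)
  finally show ?thesis .
qed

lemma two_powr_le_of_exponent_gap:
  fixes s s' x :: real
  assumes "0 \<le> x" "x \<le> 1" "s' \<le> s + 1 - x / ln 2"
  shows "2 powr s' \<le> (2 - x) * 2 powr s"
proof -
  have "2 powr s' \<le> 2 powr (s + 1 - x / ln 2)"
    using assms(3) by (intro powr_mono) auto
  also have "\<dots> = exp (ln 2) * exp (s * ln 2) * exp (- x)"
    unfolding mult_exp_exp by (simp add: powr_def field_simps)
  also have "\<dots> = 2 * exp (- x) * 2 powr s" by (simp add: powr_def)
  also have "\<dots> \<le> 2 * (1 - x / 2) * 2 powr s"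
    using exp_minus_le_one_minus_half[OF assms(1,2)] by (intro mult_right_mono) auto
  finally show ?thesis by (simp add: algebra_simps)
qed

lemma two_sq_powr_le_of_exponent_gap:
  fixes b c u v D :: real
  assumes "0 < b" "0 < c" "c < 1" "v \<le> 2 * u - D" "ln (b / 2) / ln c \<le> D"
  shows "2 * (c powr u)\<^sup>2 \<le> b * c powr v"
proof -
  have "c powr D \<le> c powr (ln (b / 2) / ln c)"
    using assms by (intro powr_mono') auto
  also have "\<dots> = b / 2" using assms(1-3) by (simp add: powr_def)
  finally have "c powr D \<le> b / 2" .
  have "2 * (c powr u)\<^sup>2 = 2 * (c powr (2 * u - D) * c powr D)"
    by (simp add: power2_eq_square powr_add[symmetric])
  also have "\<dots> \<le> b * c powr (2 * u - D)"
    using mult_left_mono[OF \<open>c powr D \<le> b / 2\<close>, of "c powr (2 * u - D)"] by (simp add: mult_ac)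
  also have "\<dots> \<le> b * c powr v"
    using assms by (intro mult_left_mono powr_mono') auto
  finally show ?thesis .
qed

text \<open>
  The gap \<open>D = 2 powr (j - \<epsilon> j) / 2 powr (j/2)\<close> is at least \<open>2 powr (j/4)\<close> once
  \<open>\<epsilon> j \<le> j/4\<close>.
\<close>
lemma eventually_aseq_sq_le:
  assumes "0 < b" "0 < c" "c < 1"
    and growth: "\<And>n. n \<ge> 1 \<Longrightarrow> eps (n + 1) \<ge> eps n + 1 / (2 powr (real n / 2) * ln 2)"
    and "(\<lambda>n. eps n / real n) \<longlonglongrightarrow> 0"
  shows "eventually (\<lambda>j. 2 * (aseq c eps j)\<^sup>2 \<le> b * aseq c eps (Suc j)) sequentially"
proof -
  have "filterlim (\<lambda>j::nat. 2 powr (real j / 4)) at_top at_top" by real_asymp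
  then have "eventually (\<lambda>j. ln (b / 2) / ln c \<le> 2 powr (real j / 4)) sequentially"
    by (simp add: filterlim_at_top)
  moreover have "eventually (\<lambda>j. eps j / real j < 1 / 4) sequentially"
    using assms(5) by (rule order_tendstoD) simp
  moreover have "eventually (\<lambda>j::nat. j \<ge> 1) sequentially" by (rule eventually_ge_at_top)
  ultimately show ?thesis
  proof eventually_elim
    case (elim j)
    define u where "u = 2 powr (real j - eps j)"
    define x where "x = 1 / 2 powr (real j / 2)"
    have "1 \<le> 2 powr (real j / 2)" by (rule ge_one_powr_ge_zero) auto
    then have "0 < x" "x \<le> 1" by (auto simp: x_def)
    have "real (Suc j) - eps (Suc j) \<le> (real j - eps j) + 1 - x / ln 2"
      using growth[OF elim(3)] by (simp add: x_def)
    then have "2 powr (real (Suc j) - eps (Suc j)) \<le> 2 * u - u * x"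
      using two_powr_le_of_exponent_gap[where s="real j - eps j" and s'="real (Suc j) - eps (Suc j)"]
        \<open>0 < x\<close> \<open>x \<le> 1\<close>
      by (simp add: u_def algebra_simps)
    moreover have "u * x = 2 powr (real j - eps j - real j / 2)"
      by (simp add: u_def x_def flip: powr_diff)
    then have "2 powr (real j / 4) \<le> u * x"
      using elim(2,3) by (auto intro!: powr_mono simp: field_simps)
    ultimately show ?case
      using two_sq_powr_le_of_exponent_gap[OF assms(1-3)] elim(1,3)
      by (simp add: aseq_eq_powr u_def)
  qed
qed

theorem lemma4p3:
  fixes b c :: real and eps :: "nat \<Rightarrow> real" and K :: "(complex \<times> complex) set"
  assumes "0 < b" "b < 1" "0 < c" "c < 1"
    and "\<And>n. n \<ge> 1 \<Longrightarrow> 0 < eps n \<and> eps n < real n"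
    and "\<And>n. n \<ge> 1 \<Longrightarrow> eps (n + 1) \<ge> eps n + 1 / (2 powr (real n / 2) * ln 2)"
    and "(\<lambda>n. eps n / real n) \<longlonglongrightarrow> 0"
    and "compact K" "K \<noteq> {}" "K \<subseteq> basin (aseq c eps)"
    and "\<forall>N. \<exists>n\<ge>N. n \<ge> 1 \<and> (\<exists>k::nat. k \<ge> 1 \<and>
           tseq eps (n + k + 1) \<le> 2 powr (real k / real (n + k + 1)))"
  shows "\<forall>N. \<exists>n\<ge>N. n \<ge> 1 \<and> (\<forall>k::nat.
           delta (aseq c eps) K (n + k) \<le> aseq c eps (n + k + 1) * b ^ k)"
proof
  fix L
  define a where "a = aseq c eps"
  have a_nonneg: "\<And>n. a n \<ge> 0" by (simp add: a_def aseq_nonneg)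
  have a_le: "a (Suc n) \<le> c" for n
    using aseq_le[OF assms(3,4), of "Suc n" eps] assms(5)[of "Suc n"] by (simp add: a_def)
  obtain N0 where ratio: "\<And>j. j \<ge> N0 \<Longrightarrow> 2 * (a j)\<^sup>2 \<le> b * a (Suc j)"
    using eventually_aseq_sq_le[OF assms(1,3,4,6,7)] by (auto simp: a_def eventually_sequentially)
  define \<rho> where "\<rho> = min (c / 2) (1 - c)"
  have "\<rho> > 0" "\<rho> + c \<le> 1" using assms(3,4) by (auto simp: \<rho>_def)
  have "K \<subseteq> basin a" using assms(10) by (simp add: a_def)
  obtain N where "N \<ge> max L N0" and small: "\<forall>p\<in>K. orb_norm a N p \<le> \<rho>"
    using uniformly_small_on_compact[OF assms(8) \<open>K \<subseteq> basin a\<close> \<open>\<rho> > 0\<close> a_nonneg a_le]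
      \<open>\<rho> + c \<le> 1\<close>
    by blast
  then have ratio_N: "\<And>j. j \<ge> N \<Longrightarrow> 2 * (a j)\<^sup>2 \<le> b * a (Suc j)" using ratio by simp
  obtain n k where "n \<ge> N" "n \<ge> 1" "tseq eps (n + k + 1) \<le> 2 powr (real k / real (n + k + 1))"
    using assms(11) by blast
  then have lower: "c ^ 2 ^ k \<le> a (Suc (n + k))"
    using aseq_ge_of_tseq_le[OF assms(3,4)] by (simp add: a_def)
  have "orb_norm a (n + k) p \<le> a (Suc (n + k))" if "p \<in> K" for p
    using orb_norm_captured[where a=a and N=N, OF assms(1) _ a_nonneg ratio_N assms(3) _ _ _ lower]
      small that assms(2,4) \<open>n \<ge> N\<close>
    by (auto simp: \<rho>_def field_simps)
  then have "delta a K (n + k + i) \<le> a (n + k + i + 1) * b ^ i" for i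
    using orb_norm_le_geometric[where a=a and N=N, OF assms(1) _ a_nonneg ratio_N] assms(2,9) \<open>n \<ge> N\<close>
    by (intro delta_le) auto
  then show "\<exists>n'\<ge>L. n' \<ge> 1 \<and> (\<forall>i. delta (aseq c eps) K (n' + i) \<le> aseq c eps (n' + i + 1) * b ^ i)"
    using \<open>n \<ge> N\<close> \<open>n \<ge> 1\<close> \<open>N \<ge> max L N0\<close> by (intro exI[of _ "n + k"]) (auto simp: a_def)
qed

end
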